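(* Let $\Gamma\subset SL_2(\mathbb R)$ be a Fuchsian group, $\mathcal A$ a finite-dimensional complex unital algebra, and $G:\mathbb H\to\mathcal A$ meromorphic with $G(\gamma z)=(cz+d)^2G(z)+2c(cz+d)1_{\mathcal A}$ for all $\gamma\in\Gamma$. For $f\in\mathcal M_k(\Gamma,\mathcal A)$ set $\mathbb D^G_k(f)=\mathsf Df-\frac{k}{4\pi i}Gf$, $\mathbb D^{G,[0]}_k(f)=f$, $\mathbb D^{G,[r+1]}_k(f)=\mathbb D^G_{k+2r}(\mathbb D^{G,[r]}_k(f))$. For $f\in\mathcal M_k(\Gamma,\mathcal A)$, $g\in\mathcal M_\ell(\Gamma,\mathcal A)$ and $r\ge0$ define $$[f,g]^L_{G;r}=\sum_{s=0}^r(-1)^s\binom{k+r-1}{r-s}\binom{\ell+r-1}{s}\bigl(\mathbb D^{G,[s]}_kf\bigr)\bigl(\mathbb D^{G,[r-s]}_\ell g\bigr),$$ $$[f,g]^R_{G;r}=\sum_{s=0}^r(-1)^s\binom{k+r-1}{r-s}\binom{\ell+r-1}{s}\bigl(\mathbb D^{G,[r-s]}_\ell g\bigr)\bigl(\mathbb D^{G,[s]}_kf\bigr),$$ and $[f,g]^{\mathrm{sym}}_{G;r}=\frac12([f,g]^L_{G;r}+[f,g]^R_{G;r})$, $[f,g]^{\mathrm{skew}}_{G;r}=\frac12([f,g]^L_{G;r}-[f,g]^R_{G;r})$. Then all four of these lie in $\mathcal M_{k+\ell+2r}(\Gamma,\mathcal A)$.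
   Context: $\mathbb H$ is the upper half-plane with $\gamma z=(az+b)/(cz+d)$, $j(\gamma,z)=cz+d$. $\mathsf D=\frac1{2\pi i}\frac{d}{dz}$. $\mathcal M_k(\Gamma,\mathcal A)$ is the space of meromorphic $F:\mathbb H\to\mathcal A$ with $j(\gamma,z)^{-k}F(\gamma z)=F(z)$ for all $\gamma\in\Gamma$. *)

theory Defs
  imports "HOL-Complex_Analysis.Complex_Analysis"
begin

definition uhp :: "complex set" where
  "uhp = {z. Im z > 0}"

definition SL2R :: "(real^2^2) set" where
  "SL2R = {g. det g = 1}"

definition fuchsian :: "(real^2^2) set \<Rightarrow> bool" where
  "fuchsian \<Gamma> \<longleftrightarrow>
     \<Gamma> \<subseteq> SL2R \<and> mat 1 \<in> \<Gamma> \<and>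
     (\<forall>g\<in>\<Gamma>. \<forall>h\<in>\<Gamma>. g ** h \<in> \<Gamma>) \<and>
     (\<forall>g\<in>\<Gamma>. matrix_inv g \<in> \<Gamma>) \<and>
     (\<forall>g\<in>\<Gamma>. \<exists>e>0. \<forall>h\<in>\<Gamma>. dist h g < e \<longrightarrow> h = g)"

definition moebius :: "real^2^2 \<Rightarrow> complex \<Rightarrow> complex" where
  "moebius g z = (of_real (g$1$1) * z + of_real (g$1$2)) / (of_real (g$2$1) * z + of_real (g$2$2))"

definition jfac :: "real^2^2 \<Rightarrow> complex \<Rightarrow> complex" where
  "jfac g z = of_real (g$2$1) * z + of_real (g$2$2)"

text \<open>A finite-dimensional complex unital (associative) algebra, presented on the
  coordinate space complex^'n (w.r.t. a chosen basis) by a complex-bilinear,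
  associative multiplication with unit element.\<close>
definition fd_unital_algebra ::
  "(complex^'n \<Rightarrow> complex^'n \<Rightarrow> complex^'n) \<Rightarrow> complex^'n \<Rightarrow> bool" where
  "fd_unital_algebra mul one \<longleftrightarrow>
     (\<forall>x y z. mul (x + y) z = mul x z + mul y z) \<and>
     (\<forall>x y z. mul x (y + z) = mul x y + mul x z) \<and>
     (\<forall>c x y. mul (c *s x) y = c *s mul x y) \<and>
     (\<forall>c x y. mul x (c *s y) = c *s mul x y) \<and>
     (\<forall>x y z. mul (mul x y) z = mul x (mul y z)) \<and>
     (\<forall>x. mul one x = x \<and> mul x one = x)"

definition vmeromorphic_on :: "(complex \<Rightarrow> complex^'n) \<Rightarrow> complex set \<Rightarrow> bool" where
  "vmeromorphic_on F S \<longleftrightarrow> (\<forall>i. (\<lambda>z. F z $ i) meromorphic_on S)"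

text \<open>M_k(Gamma, A): meromorphic F with j(g,z)^(-k) F(g z) = F(z); as usual for meromorphic
  functions, the identity is required away from a discrete (sparse) set.\<close>
definition MF :: "(real^2^2) set \<Rightarrow> int \<Rightarrow> (complex \<Rightarrow> complex^'n) set" where
  "MF \<Gamma> k = {F. vmeromorphic_on F uhp \<and>
     (\<forall>g\<in>\<Gamma>. \<forall>\<^sub>\<approx>z\<in>uhp. (jfac g z) powi (-k) *s F (moebius g z) = F z)}"

definition Dop :: "(complex \<Rightarrow> complex^'n) \<Rightarrow> complex \<Rightarrow> complex^'n" where
  "Dop F z = (\<chi> i. deriv (\<lambda>w. F w $ i) z / (2 * of_real pi * \<i>))"

definition DG ::
  "(complex^'n \<Rightarrow> complex^'n \<Rightarrow> complex^'n) \<Rightarrow> (complex \<Rightarrow> complex^'n) \<Rightarrow> int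
     \<Rightarrow> (complex \<Rightarrow> complex^'n) \<Rightarrow> complex \<Rightarrow> complex^'n" where
  "DG mul G k F z = Dop F z - (of_int k / (4 * of_real pi * \<i>)) *s mul (G z) (F z)"

primrec DGit ::
  "(complex^'n \<Rightarrow> complex^'n \<Rightarrow> complex^'n) \<Rightarrow> (complex \<Rightarrow> complex^'n) \<Rightarrow> int \<Rightarrow> nat
     \<Rightarrow> (complex \<Rightarrow> complex^'n) \<Rightarrow> complex \<Rightarrow> complex^'n" where
  "DGit mul G k 0 F = F"
| "DGit mul G k (Suc r) F = DG mul G (k + 2 * int r) (DGit mul G k r F)"

definition bracketL ::
  "(complex^'n \<Rightarrow> complex^'n \<Rightarrow> complex^'n) \<Rightarrow> (complex \<Rightarrow> complex^'n) \<Rightarrow> int \<Rightarrow> int \<Rightarrow> nat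
     \<Rightarrow> (complex \<Rightarrow> complex^'n) \<Rightarrow> (complex \<Rightarrow> complex^'n) \<Rightarrow> complex \<Rightarrow> complex^'n" where
  "bracketL mul G k l r f g z =
     (\<Sum>s\<le>r. ((-1) ^ s * (of_int (k + int r - 1) gchoose (r - s))
                         * (of_int (l + int r - 1) gchoose s))
             *s mul (DGit mul G k s f z) (DGit mul G l (r - s) g z))"

definition bracketR ::
  "(complex^'n \<Rightarrow> complex^'n \<Rightarrow> complex^'n) \<Rightarrow> (complex \<Rightarrow> complex^'n) \<Rightarrow> int \<Rightarrow> int \<Rightarrow> nat
     \<Rightarrow> (complex \<Rightarrow> complex^'n) \<Rightarrow> (complex \<Rightarrow> complex^'n) \<Rightarrow> complex \<Rightarrow> complex^'n" where
  "bracketR mul G k l r f g z =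
     (\<Sum>s\<le>r. ((-1) ^ s * (of_int (k + int r - 1) gchoose (r - s))
                         * (of_int (l + int r - 1) gchoose s))
             *s mul (DGit mul G l (r - s) g z) (DGit mul G k s f z))"

definition bracketSym where
  "bracketSym mul G k l r f g z =
     (1/2 :: complex) *s (bracketL mul G k l r f g z + bracketR mul G k l r f g z)"

definition bracketSkew where
  "bracketSkew mul G k l r f g z =
     (1/2 :: complex) *s (bracketL mul G k l r f g z - bracketR mul G k l r f g z)"

end

theory Submission
  imports Defs
begin

(* The operator D^G_k raises the weight by 2. Differentiating F (g z) = j(g,z)^k F z, where
   d(g z)/dz = j(g,z)^-2 and dj(g,z)/dz = c, shows that D F transforms with weight k + 2 up to the
   error term k c j(g,z)^(k+1) F z / (2 pi i); the inhomogeneous term 2 c j(g,z) 1 in the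
   transformation law of G contributes exactly the opposite amount to -(k / (4 pi i)) G F.
   Hence D^[s]_k f has weight k + 2 s, each summand of the brackets is a product of forms of
   weights k + 2 s and l + 2 (r - s), which is modular of weight k + l + 2 r because the algebra
   multiplication is bilinear, and modular forms of a fixed weight form a vector space. *)

section \<open>Moebius transformations of the upper half-plane\<close>

lemma open_uhp: "open uhp"
  unfolding uhp_def by (rule open_halfspace_Im_gt)

lemma jfac_nonzero:
  assumes "det g \<noteq> 0" "Im w \<noteq> 0"
  shows "jfac g w \<noteq> 0"
proof
  assume "jfac g w = 0"
  then have "g$2$1 * Im w = 0" "g$2$1 * Re w + g$2$2 = 0"
    by (auto simp: jfac_def complex_eq_iff)
  with assms show False by (auto simp: det_2)
qed

lemma jfac_nonzero_SL2R: "g \<in> SL2R \<Longrightarrow> w \<in> uhp \<Longrightarrow> jfac g w \<noteq> 0"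
  by (rule jfac_nonzero) (auto simp: SL2R_def uhp_def)

lemma Im_moebius: "Im (moebius g w) = det g * Im w / (cmod (jfac g w))\<^sup>2"
  by (simp add: moebius_def jfac_def Im_divide det_2 cmod_power2 algebra_simps)

lemma moebius_in_uhp:
  assumes "g \<in> SL2R" "w \<in> uhp"
  shows "moebius g w \<in> uhp"
  using jfac_nonzero_SL2R[OF assms] assms by (simp add: Im_moebius SL2R_def uhp_def)

lemma has_field_derivative_jfac: "(jfac g has_field_derivative of_real (g$2$1)) (at w)"
  unfolding jfac_def by (auto intro!: derivative_eq_intros)

lemma has_field_derivative_moebius:
  assumes "jfac g w \<noteq> 0"
  shows "(moebius g has_field_derivative of_real (det g) / (jfac g w)\<^sup>2) (at w)"
proof -
  have eq: "moebius g = (\<lambda>u. (of_real (g$1$1) * u + of_real (g$1$2)) / jfac g u)"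
    by (simp add: fun_eq_iff moebius_def jfac_def)
  have num: "((\<lambda>u. of_real (g$1$1) * u + of_real (g$1$2)) has_field_derivative of_real (g$1$1)) (at w)"
    by (auto intro!: derivative_eq_intros)
  show ?thesis
    unfolding eq
    by (rule DERIV_cong[OF DERIV_divide[OF num has_field_derivative_jfac assms]])
       (simp add: det_2 jfac_def power2_eq_square algebra_simps)
qed

lemma inj_on_moebius:
  assumes "det g \<noteq> 0"
  shows "inj_on (moebius g) {w. jfac g w \<noteq> 0}"
proof (rule inj_onI)
  fix w z assume w: "w \<in> {w. jfac g w \<noteq> 0}" and z: "z \<in> {w. jfac g w \<noteq> 0}"
    and eq: "moebius g w = moebius g z"
  then have "(of_real (g$1$1) * w + of_real (g$1$2)) * jfac g z = (of_real (g$1$1) * z + of_real (g$1$2)) * jfac g w"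
    by (simp add: moebius_def frac_eq_eq flip: jfac_def)
  then have "of_real (det g) * (w - z) = 0"
    by (simp add: det_2 jfac_def algebra_simps)
  with assms show "w = z" by simp
qed

section \<open>Pulling back cosparse properties\<close>

lemma eventually_at_imp_eventually_nhds:
  fixes x :: "'a :: t1_space"
  assumes "eventually P (at x)"
  shows "eventually (\<lambda>y. eventually P (nhds y)) (at x)"
proof -
  from assms obtain S where S: "open S" "x \<in> S" "\<forall>y\<in>S. y \<noteq> x \<longrightarrow> P y"
    unfolding eventually_at_topological by blast
  have "eventually P (nhds y)" if "y \<in> S - {x}" for y
    using S that by (auto simp: eventually_nhds intro!: exI[of _ "S - {x}"])
  then show ?thesis
    using S by (auto simp: eventually_at_topological)
qed

lemma eventually_cosparse_imp_eventually_nhds: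
  fixes A :: "'a :: t1_space set"
  assumes "open A" "eventually P (cosparse A)"
  shows "eventually (\<lambda>y. eventually P (nhds y)) (cosparse A)"
  using assms by (auto simp: eventually_cosparse_open_eq intro: eventually_at_imp_eventually_nhds)

lemma eventually_cosparse_compose:
  assumes A: "open A" and B: "open B" and maps: "f ` A \<subseteq> B"
    and cont: "continuous_on A f" and inj: "inj_on f A"
    and P: "eventually P (cosparse B)"
  shows "eventually (\<lambda>x. P (f x)) (cosparse A)"
proof -
  have "eventually (\<lambda>x. P (f x)) (at z)" if z: "z \<in> A" for z
  proof -
    have "f z \<in> B" using maps z by blast
    then have "eventually P (at (f z))"
      using B P by (simp add: eventually_cosparse_open_eq)
    moreover have "filterlim f (at (f z)) (at z)"
    proof (rule filterlim_atI)
      have "(f \<longlongrightarrow> f z) (at z within A)"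
        using cont z by (simp add: continuous_on_def)
      then show "(f \<longlongrightarrow> f z) (at z)"
        by (simp add: at_within_open[OF z A])
      show "eventually (\<lambda>x. f x \<noteq> f z) (at z)"
        using eventually_at_in_open[OF A z]
        by eventually_elim (metis DiffE inj inj_onD insertCI z)
    qed
    ultimately show ?thesis by (rule eventually_compose_filterlim)
  qed
  with A show ?thesis by (simp add: eventually_cosparse_open_eq)
qed

lemma eventually_cosparse_uhp_moebius:
  assumes g: "g \<in> SL2R" and P: "\<forall>\<^sub>\<approx>w\<in>uhp. P w"
  shows "\<forall>\<^sub>\<approx>w\<in>uhp. P (moebius g w)"
proof (rule eventually_cosparse_compose[OF open_uhp open_uhp _ _ _ P])
  show "moebius g ` uhp \<subseteq> uhp"
    using moebius_in_uhp[OF g] by blast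
  have "isCont (moebius g) w" if "w \<in> uhp" for w
    using has_field_derivative_moebius[OF jfac_nonzero_SL2R[OF g that]] by (rule DERIV_isCont)
  then show "continuous_on uhp (moebius g)"
    by (simp add: continuous_at_imp_continuous_on)
  have "det g \<noteq> 0" "uhp \<subseteq> {w. jfac g w \<noteq> 0}"
    using g jfac_nonzero_SL2R[OF g] by (auto simp: SL2R_def)
  then show "inj_on (moebius g) uhp"
    using inj_on_moebius inj_on_subset by blast
qed

section \<open>Derivatives of slash-invariant functions\<close>

lemma deriv_slash_moebius:
  fixes f :: "complex \<Rightarrow> complex"
  assumes g: "g \<in> SL2R" and w: "w \<in> uhp"
    and df: "f field_differentiable at w" and dfg: "f field_differentiable at (moebius g w)"
    and slash: "eventually (\<lambda>u. f (moebius g u) = jfac g u powi k * f u) (nhds w)"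
  shows "deriv f (moebius g w) =
    jfac g w powi (k + 2) * deriv f w + of_int k * of_real (g$2$1) * jfac g w powi (k + 1) * f w"
proof -
  define J where "J = jfac g w"
  define c where "c = (of_real (g$2$1) :: complex)"
  have J: "J \<noteq> 0"
    unfolding J_def using jfac_nonzero_SL2R[OF g w] .
  have "(moebius g has_field_derivative 1 / J\<^sup>2) (at w)"
    using has_field_derivative_moebius[OF J[unfolded J_def]] g by (simp add: J_def SL2R_def)
  then have "((\<lambda>u. f (moebius g u)) has_field_derivative deriv f (moebius g w) * (1 / J\<^sup>2)) (at w)"
    by (rule DERIV_chain2[where g = "moebius g" and x = w, OF field_differentiable_derivI[OF dfg]])
  moreover have "((\<lambda>u. f (moebius g u)) has_field_derivative
      of_int k * J powi (k - 1) * c * f w + J powi k * deriv f w) (at w)"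
  proof -
    have "((\<lambda>u. jfac g u powi k * f u) has_field_derivative
        of_int k * J powi (k - 1) * c * f w + J powi k * deriv f w) (at w)"
      using J unfolding J_def c_def
      by (auto intro!: derivative_eq_intros has_field_derivative_jfac field_differentiable_derivI[OF df])
    then show ?thesis
      by (rule DERIV_cong_ev[OF refl slash refl, THEN iffD2])
  qed
  ultimately have "deriv f (moebius g w) * (1 / J\<^sup>2) = of_int k * J powi (k - 1) * c * f w + J powi k * deriv f w"
    by (rule DERIV_unique)
  moreover have "J powi (k + 1) = J powi (k - 1) * J\<^sup>2" "J powi (k + 2) = J powi k * J\<^sup>2"
    using power_int_add[of J "k - 1" 2] power_int_add[of J k 2] J by (simp_all add: add.commute)
  ultimately show ?thesis
    using J unfolding J_def[symmetric] c_def[symmetric] by (simp add: field_simps)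
qed

lemma Dop_slash_moebius:
  fixes F :: "complex \<Rightarrow> complex^'n"
  assumes g: "g \<in> SL2R" and w: "w \<in> uhp"
    and dF: "\<And>i. (\<lambda>u. F u $ i) field_differentiable at w"
    and dFg: "\<And>i. (\<lambda>u. F u $ i) field_differentiable at (moebius g w)"
    and slash: "eventually (\<lambda>u. F (moebius g u) = jfac g u powi k *s F u) (nhds w)"
  shows "Dop F (moebius g w) = jfac g w powi (k + 2) *s Dop F w +
    (of_int k * of_real (g$2$1) * jfac g w powi (k + 1) / (2 * of_real pi * \<i>)) *s F w"
proof -
  have "deriv (\<lambda>u. F u $ i) (moebius g w) =
    jfac g w powi (k + 2) * deriv (\<lambda>u. F u $ i) w + of_int k * of_real (g$2$1) * jfac g w powi (k + 1) * F w $ i"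
    for i
    using slash by (intro deriv_slash_moebius[OF g w dF dFg]) (auto elim!: eventually_mono)
  then show ?thesis
    by (simp add: Dop_def vec_eq_iff add_divide_distrib)
qed

section \<open>Linear structure of the spaces of modular forms\<close>

lemma MF_zero: "(\<lambda>z. 0) \<in> MF \<Gamma> k"
  by (simp add: MF_def vmeromorphic_on_def meromorphic_on_const)

lemma MF_add:
  assumes "F \<in> MF \<Gamma> k" "H \<in> MF \<Gamma> k"
  shows "(\<lambda>z. F z + H z) \<in> MF \<Gamma> k"
proof -
  have "vmeromorphic_on (\<lambda>z. F z + H z) uhp"
    using assms by (auto simp: MF_def vmeromorphic_on_def intro!: meromorphic_on_add)
  moreover have "\<forall>\<^sub>\<approx>z\<in>uhp. jfac g z powi (-k) *s (F (moebius g z) + H (moebius g z)) = F z + H z"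
    if "g \<in> \<Gamma>" for g
  proof -
    have "\<forall>\<^sub>\<approx>z\<in>uhp. jfac g z powi (-k) *s F (moebius g z) = F z"
      "\<forall>\<^sub>\<approx>z\<in>uhp. jfac g z powi (-k) *s H (moebius g z) = H z"
      using assms that by (auto simp: MF_def)
    then show ?thesis by eventually_elim (simp add: vector_add_ldistrib)
  qed
  ultimately show ?thesis by (simp add: MF_def)
qed

lemma MF_scale:
  assumes "F \<in> MF \<Gamma> k"
  shows "(\<lambda>z. c *s F z) \<in> MF \<Gamma> k"
proof -
  have "vmeromorphic_on (\<lambda>z. c *s F z) uhp"
    using assms by (auto simp: MF_def vmeromorphic_on_def intro!: meromorphic_on_mult)
  moreover have "\<forall>\<^sub>\<approx>z\<in>uhp. jfac g z powi (-k) *s (c *s F (moebius g z)) = c *s F z"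
    if "g \<in> \<Gamma>" for g
  proof -
    have "\<forall>\<^sub>\<approx>z\<in>uhp. jfac g z powi (-k) *s F (moebius g z) = F z"
      using assms that by (auto simp: MF_def)
    then show ?thesis by eventually_elim (metis vector_smult_assoc mult.commute)
  qed
  ultimately show ?thesis by (simp add: MF_def)
qed

lemma MF_diff:
  assumes "F \<in> MF \<Gamma> k" "H \<in> MF \<Gamma> k"
  shows "(\<lambda>z. F z - H z) \<in> MF \<Gamma> k"
proof -
  have "(\<lambda>z. F z + (-1) *s H z) \<in> MF \<Gamma> k"
    by (intro MF_add MF_scale assms)
  moreover have "(\<lambda>z. F z + (-1) *s H z) = (\<lambda>z. F z - H z)"
    by (simp add: fun_eq_iff vec_eq_iff)
  ultimately show ?thesis by simp
qed

lemma MF_sum: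
  assumes "finite I" "\<And>i. i \<in> I \<Longrightarrow> F i \<in> MF \<Gamma> k"
  shows "(\<lambda>z. \<Sum>i\<in>I. F i z) \<in> MF \<Gamma> k"
  using assms by (induction I rule: finite_induct) (auto intro: MF_zero MF_add)

lemma powi_neg_scale_eq_iff:
  fixes J :: complex
  assumes "J \<noteq> 0"
  shows "J powi (-k) *s X = Y \<longleftrightarrow> X = J powi k *s Y"
  using assms by (auto simp: power_int_minus vector_smult_assoc)

lemma MF_I:
  assumes "\<Gamma> \<subseteq> SL2R" "vmeromorphic_on F uhp"
    and "\<And>g. g \<in> \<Gamma> \<Longrightarrow> \<forall>\<^sub>\<approx>z\<in>uhp. F (moebius g z) = jfac g z powi k *s F z"
  shows "F \<in> MF \<Gamma> k"
proof -
  have "\<forall>\<^sub>\<approx>z\<in>uhp. jfac g z powi (-k) *s F (moebius g z) = F z" if g: "g \<in> \<Gamma>" for g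
    using assms(3)[OF g] eventually_in_cosparse[OF order.refl open_uhp]
  proof eventually_elim
    case (elim z)
    then show ?case
      using assms(1) g jfac_nonzero_SL2R powi_neg_scale_eq_iff by blast
  qed
  with assms(2) show ?thesis by (simp add: MF_def)
qed

lemma MF_eventually_nhds_slash:
  assumes "\<Gamma> \<subseteq> SL2R" "g \<in> \<Gamma>" "F \<in> MF \<Gamma> k"
  shows "\<forall>\<^sub>\<approx>w\<in>uhp. eventually (\<lambda>u. F (moebius g u) = jfac g u powi k *s F u) (nhds w)"
proof -
  have "\<forall>\<^sub>\<approx>u\<in>uhp. jfac g u powi (-k) *s F (moebius g u) = F u"
    using assms by (auto simp: MF_def)
  moreover have "\<forall>\<^sub>\<approx>u\<in>uhp. u \<in> uhp"
    by (rule eventually_in_cosparse[OF order.refl open_uhp])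
  ultimately have "\<forall>\<^sub>\<approx>u\<in>uhp. F (moebius g u) = jfac g u powi k *s F u"
  proof eventually_elim
    case (elim u)
    have "jfac g u \<noteq> 0"
      using assms(1,2) elim(2) jfac_nonzero_SL2R by blast
    with elim(1) show ?case
      using powi_neg_scale_eq_iff by blast
  qed
  then show ?thesis
    by (rule eventually_cosparse_imp_eventually_nhds[OF open_uhp])
qed

section \<open>Products and the operator DG\<close>

context
  fixes mul :: "complex^'n \<Rightarrow> complex^'n \<Rightarrow> complex^'n" and one :: "complex^'n"
  assumes alg: "fd_unital_algebra mul one"
begin

lemma mul_add_left: "mul (x + y) z = mul x z + mul y z"
  and mul_add_right: "mul x (y + z) = mul x y + mul x z"
  and mul_scale_left: "mul (c *s x) y = c *s mul x y"
  and mul_scale_right: "mul x (c *s y) = c *s mul x y"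
  and mul_one_left: "mul one x = x"
  using alg by (simp_all add: fd_unital_algebra_def)

lemma mul_zero_left: "mul 0 y = 0"
  using mul_add_left[of 0 0 y] by simp

lemma mul_zero_right: "mul x 0 = 0"
  using mul_add_right[of x 0 0] by simp

lemma mul_sum_left: "mul (sum f S) y = (\<Sum>j\<in>S. mul (f j) y)"
  by (induction S rule: infinite_finite_induct) (simp_all add: mul_zero_left mul_add_left)

lemma mul_sum_right: "mul x (sum f S) = (\<Sum>j\<in>S. mul x (f j))"
  by (induction S rule: infinite_finite_induct) (simp_all add: mul_zero_right mul_add_right)

lemma mul_component_eq_sum:
  "mul x y $ i = (\<Sum>j\<in>UNIV. \<Sum>m\<in>UNIV. x$j * y$m * mul (axis j 1) (axis m 1) $ i)"
proof -
  have "mul x y = mul (\<Sum>j\<in>UNIV. x$j *s axis j 1) (\<Sum>m\<in>UNIV. y$m *s axis m 1)"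
    by (simp only: basis_expansion)
  also have "\<dots> = (\<Sum>j\<in>UNIV. \<Sum>m\<in>UNIV. mul (x$j *s axis j 1) (y$m *s axis m 1))"
    by (subst mul_sum_left) (simp only: mul_sum_right)
  also have "\<dots> = (\<Sum>j\<in>UNIV. \<Sum>m\<in>UNIV. (x$j * y$m) *s mul (axis j 1) (axis m 1))"
    by (simp only: mul_scale_left mul_scale_right vector_smult_assoc mult.commute)
  finally show ?thesis
    by (simp only: sum_component vector_smult_component)
qed

lemma vmeromorphic_on_mul:
  assumes "vmeromorphic_on F A" "vmeromorphic_on H A"
  shows "vmeromorphic_on (\<lambda>z. mul (F z) (H z)) A"
  unfolding vmeromorphic_on_def
proof
  fix i
  have "(\<lambda>z. mul (F z) (H z) $ i) =
        (\<lambda>z. \<Sum>j\<in>UNIV. \<Sum>m\<in>UNIV. F z $ j * H z $ m * mul (axis j 1) (axis m 1) $ i)"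
    by (rule ext) (rule mul_component_eq_sum)
  then show "(\<lambda>z. mul (F z) (H z) $ i) meromorphic_on A"
    using assms unfolding vmeromorphic_on_def
    by (auto intro!: meromorphic_on_sum meromorphic_on_mult meromorphic_on_const)
qed

lemma MF_mul:
  assumes \<Gamma>: "\<Gamma> \<subseteq> SL2R" and F: "F \<in> MF \<Gamma> k" and H: "H \<in> MF \<Gamma> l" and m: "m = k + l"
  shows "(\<lambda>z. mul (F z) (H z)) \<in> MF \<Gamma> m"
proof -
  have "vmeromorphic_on (\<lambda>z. mul (F z) (H z)) uhp"
    using F H by (intro vmeromorphic_on_mul) (auto simp: MF_def)
  moreover have "\<forall>\<^sub>\<approx>z\<in>uhp. jfac g z powi (-m) *s mul (F (moebius g z)) (H (moebius g z)) = mul (F z) (H z)"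
    if g: "g \<in> \<Gamma>" for g
  proof -
    have "\<forall>\<^sub>\<approx>z\<in>uhp. jfac g z powi (-k) *s F (moebius g z) = F z"
      "\<forall>\<^sub>\<approx>z\<in>uhp. jfac g z powi (-l) *s H (moebius g z) = H z"
      "\<forall>\<^sub>\<approx>z\<in>uhp. z \<in> uhp"
      using F H g by (auto simp: MF_def intro: eventually_in_cosparse[OF order.refl open_uhp])
    then show ?thesis
    proof eventually_elim
      case (elim z)
      have "jfac g z \<noteq> 0"
        using \<Gamma> g elim(3) jfac_nonzero_SL2R by blast
      then have "jfac g z powi (-m) = jfac g z powi (-k) * jfac g z powi (-l)"
        using m power_int_add[of "jfac g z" "-k" "-l"] by simp
      then have "jfac g z powi (-m) *s mul (F (moebius g z)) (H (moebius g z)) =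
          mul (jfac g z powi (-k) *s F (moebius g z)) (jfac g z powi (-l) *s H (moebius g z))"
        by (simp add: mul_scale_left mul_scale_right vector_smult_assoc)
      with elim show ?case by simp
    qed
  qed
  ultimately show ?thesis by (simp add: MF_def)
qed

lemma DG_slash_moebius:
  fixes F G :: "complex \<Rightarrow> complex^'n"
  assumes g: "g \<in> SL2R" and w: "w \<in> uhp"
    and dF: "\<And>i. (\<lambda>u. F u $ i) field_differentiable at w"
    and dFg: "\<And>i. (\<lambda>u. F u $ i) field_differentiable at (moebius g w)"
    and slash: "eventually (\<lambda>u. F (moebius g u) = jfac g u powi k *s F u) (nhds w)"
    and Gw: "G (moebius g w) = (jfac g w)^2 *s G w + (2 * of_real (g$2$1) * jfac g w) *s one"
  shows "DG mul G k F (moebius g w) = jfac g w powi (k + 2) *s DG mul G k F w"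
proof -
  define J where "J = jfac g w"
  define c where "c = (of_real (g$2$1) :: complex)"
  define P where "P = J powi k"
  have J: "J \<noteq> 0"
    unfolding J_def using jfac_nonzero_SL2R[OF g w] .
  have pow: "J powi (k + 1) = J * P" "J powi (k + 2) = J\<^sup>2 * P"
    using power_int_add[of J k 1] power_int_add[of J k 2] J by (simp_all add: P_def)
  have Fw: "F (moebius g w) = P *s F w"
    using eventually_nhds_x_imp_x[OF slash] by (simp add: P_def J_def)
  have D: "Dop F (moebius g w) = (J\<^sup>2 * P) *s Dop F w + (of_int k * c * (J * P) / (2 * of_real pi * \<i>)) *s F w"
    using Dop_slash_moebius[OF g w dF dFg slash] by (simp add: pow flip: J_def c_def)
  have M: "mul (G (moebius g w)) (F (moebius g w)) = (J\<^sup>2 * P) *s mul (G w) (F w) + (2 * c * J * P) *s F w"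
    unfolding Gw Fw J_def[symmetric] c_def[symmetric]
    by (simp add: mul_add_left mul_scale_left mul_scale_right mul_one_left vector_smult_assoc ac_simps)
  \<comment> \<open>the two multiples of \<open>F w\<close> cancel\<close>
  show ?thesis
    unfolding J_def[symmetric] pow(2) DG_def D M
    by (simp add: vec_eq_iff field_simps)
qed

lemma vmeromorphic_on_DG:
  assumes "vmeromorphic_on G A" "vmeromorphic_on F A"
  shows "vmeromorphic_on (DG mul G k F) A"
  unfolding vmeromorphic_on_def
proof
  fix i
  have "(\<lambda>z. DG mul G k F z $ i) = (\<lambda>z. deriv (\<lambda>w. F w $ i) z / (2 * of_real pi * \<i>)
      - of_int k / (4 * of_real pi * \<i>) * mul (G z) (F z) $ i)"
    by (simp add: fun_eq_iff DG_def Dop_def)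
  moreover have "(\<lambda>z. mul (G z) (F z) $ i) meromorphic_on A"
    using vmeromorphic_on_mul[OF assms] by (simp add: vmeromorphic_on_def)
  ultimately show "(\<lambda>z. DG mul G k F z $ i) meromorphic_on A"
    using assms(2) unfolding vmeromorphic_on_def
    by (auto intro!: meromorphic_on_diff meromorphic_on_divide meromorphic_on_deriv
        meromorphic_on_mult meromorphic_on_const)
qed

context
  fixes \<Gamma> :: "(real^2^2) set" and G :: "complex \<Rightarrow> complex^'n"
  assumes \<Gamma>: "\<Gamma> \<subseteq> SL2R" and G_mero: "vmeromorphic_on G uhp"
    and G_slash: "\<forall>\<gamma>\<in>\<Gamma>. \<forall>\<^sub>\<approx>z\<in>uhp. G (moebius \<gamma> z) =
            (jfac \<gamma> z)^2 *s G z + (2 * of_real (\<gamma>$2$1) * jfac \<gamma> z) *s one"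
begin

lemma DG_MF:
  assumes F: "F \<in> MF \<Gamma> k"
  shows "DG mul G k F \<in> MF \<Gamma> (k + 2)"
proof (rule MF_I[OF \<Gamma> vmeromorphic_on_DG[OF G_mero]])
  show F_mero: "vmeromorphic_on F uhp"
    using F by (simp add: MF_def)
  fix \<gamma> assume \<gamma>: "\<gamma> \<in> \<Gamma>"
  then have \<gamma>_SL2R: "\<gamma> \<in> SL2R"
    using \<Gamma> by blast
  have analytic: "\<forall>\<^sub>\<approx>w\<in>uhp. \<forall>i. (\<lambda>u. F u $ i) analytic_on {w}"
    using F_mero
    by (intro eventually_all_finite) (simp add: vmeromorphic_on_def meromorphic_on_imp_analytic_cosparse)
  moreover from analytic have "\<forall>\<^sub>\<approx>w\<in>uhp. \<forall>i. (\<lambda>u. F u $ i) analytic_on {moebius \<gamma> w}"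
    by (rule eventually_cosparse_uhp_moebius[OF \<gamma>_SL2R])
  moreover note MF_eventually_nhds_slash[OF \<Gamma> \<gamma> F] bspec[OF G_slash \<gamma>]
    eventually_in_cosparse[OF order.refl open_uhp]
  ultimately show "\<forall>\<^sub>\<approx>w\<in>uhp. DG mul G k F (moebius \<gamma> w) = jfac \<gamma> w powi (k + 2) *s DG mul G k F w"
  proof eventually_elim
    case (elim w)
    show ?case
      by (rule DG_slash_moebius[OF \<gamma>_SL2R elim(5) _ _ elim(3,4)])
         (use elim(1,2) analytic_on_imp_differentiable_at in blast)+
  qed
qed

lemma DGit_MF:
  assumes "F \<in> MF \<Gamma> k"
  shows "DGit mul G k r F \<in> MF \<Gamma> (k + 2 * int r)"
proof (induction r)
  case 0
  show ?case using assms by simp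
next
  case (Suc r)
  then have "DG mul G (k + 2 * int r) (DGit mul G k r F) \<in> MF \<Gamma> (k + 2 * int r + 2)"
    by (rule DG_MF)
  then show ?case by (simp add: algebra_simps)
qed

lemma bracketL_MF:
  assumes "f \<in> MF \<Gamma> k" "g \<in> MF \<Gamma> l"
  shows "bracketL mul G k l r f g \<in> MF \<Gamma> (k + l + 2 * int r)"
proof -
  have "(\<lambda>z. mul (DGit mul G k s f z) (DGit mul G l (r - s) g z)) \<in> MF \<Gamma> (k + l + 2 * int r)"
    if "s \<in> {..r}" for s
    using that by (intro MF_mul[OF \<Gamma> DGit_MF[OF assms(1)] DGit_MF[OF assms(2)]]) (auto simp: of_nat_diff)
  then show ?thesis
    unfolding bracketL_def[abs_def] by (intro MF_sum MF_scale) auto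
qed

lemma bracketR_MF:
  assumes "f \<in> MF \<Gamma> k" "g \<in> MF \<Gamma> l"
  shows "bracketR mul G k l r f g \<in> MF \<Gamma> (k + l + 2 * int r)"
proof -
  have "(\<lambda>z. mul (DGit mul G l (r - s) g z) (DGit mul G k s f z)) \<in> MF \<Gamma> (k + l + 2 * int r)"
    if "s \<in> {..r}" for s
    using that by (intro MF_mul[OF \<Gamma> DGit_MF[OF assms(2)] DGit_MF[OF assms(1)]]) (auto simp: of_nat_diff)
  then show ?thesis
    unfolding bracketR_def[abs_def] by (intro MF_sum MF_scale) auto
qed

end

end

theorem mainTheorem14:
  fixes \<Gamma> :: "(real^2^2) set"
    and mul :: "complex^'n \<Rightarrow> complex^'n \<Rightarrow> complex^'n"
    and one :: "complex^'n"
    and G f g :: "complex \<Rightarrow> complex^'n"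
    and k l :: int and r :: nat
  assumes "fuchsian \<Gamma>"
    and "fd_unital_algebra mul one"
    and "vmeromorphic_on G uhp"
    and "\<forall>\<gamma>\<in>\<Gamma>. \<forall>\<^sub>\<approx>z\<in>uhp. G (moebius \<gamma> z) =
            (jfac \<gamma> z)^2 *s G z + (2 * of_real (\<gamma>$2$1) * jfac \<gamma> z) *s one"
    and "f \<in> MF \<Gamma> k"
    and "g \<in> MF \<Gamma> l"
  shows "bracketL mul G k l r f g \<in> MF \<Gamma> (k + l + 2 * int r) \<and>
         bracketR mul G k l r f g \<in> MF \<Gamma> (k + l + 2 * int r) \<and>
         bracketSym mul G k l r f g \<in> MF \<Gamma> (k + l + 2 * int r) \<and>
         bracketSkew mul G k l r f g \<in> MF \<Gamma> (k + l + 2 * int r)"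
proof -
  have \<Gamma>: "\<Gamma> \<subseteq> SL2R"
    using assms(1) by (simp add: fuchsian_def)
  note L = bracketL_MF[OF assms(2) \<Gamma> assms(3,4,5,6)]
  note R = bracketR_MF[OF assms(2) \<Gamma> assms(3,4,5,6)]
  show ?thesis
    unfolding bracketSym_def[abs_def] bracketSkew_def[abs_def]
    using L R by (intro conjI MF_scale MF_add MF_diff)
qed

end
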